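(* Let $d_*\ge1$ and $\Delta\in\mathbb N$, $\Delta\ge1$. Let $\approx_\Delta$ be the equivalence relation on $\mathbb Z^{d_*}$ generated by the relation: $a\sim b$ iff $|a|=|b|$ and $[a-b]\le\Delta$, and let $$d_\Delta=\sup\{[a-b]:\ a,b\in\mathbb Z^{d_*},\ a\approx_\Delta b\}.$$ Then $$d_\Delta\le C\,\Delta^{\frac{(d_*+1)!}{2}},$$ where $C$ depends only on $d_*$.
   Context: For $a\in\mathbb Z^{d_*}$, $|a|$ denotes the Euclidean norm, and $[a-b]=\min(|a-b|,|a+b|)$ for $a,b\in\mathbb Z^{d_*}$. "Generated by" means the smallest equivalence relation containing $\sim$ (i.e. $a\approx_\Delta b$ iff there is a finite chain $a=c_0\sim c_1\sim\dots\sim c_k=b$). *)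

theory Defs
  imports "HOL-Analysis.Analysis"
begin

text \<open>Points of Z^d are vectors int^'n, d = CARD('n).\<close>

definition inorm :: "int ^ 'n \<Rightarrow> real" where
  "inorm a = sqrt (\<Sum>i\<in>UNIV. real_of_int ((a $ i)\<^sup>2))"

definition bdist :: "int ^ 'n \<Rightarrow> int ^ 'n \<Rightarrow> real" where
  "bdist a b = min (inorm (a - b)) (inorm (a + b))"

definition simrel :: "nat \<Rightarrow> int ^ 'n \<Rightarrow> int ^ 'n \<Rightarrow> bool" where
  "simrel \<Delta> a b \<longleftrightarrow> inorm a = inorm b \<and> bdist a b \<le> real \<Delta>"

definition approx_rel :: "nat \<Rightarrow> int ^ 'n \<Rightarrow> int ^ 'n \<Rightarrow> bool" where
  "approx_rel \<Delta> = equivclp (simrel \<Delta>)"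

definition dDelta :: "nat \<Rightarrow> ('n::finite) itself \<Rightarrow> ereal" where
  "dDelta \<Delta> _ = Sup {ereal (bdist a b) | a b :: int ^ ('n::finite). approx_rel \<Delta> a b}"

end

theory Submission
  imports Defs
begin

text \<open>
  An approx-chain a = c_0 ~ c_1 ~ ... ~ c_k = b lifts, after changing signs, to a chain of lattice
  points on the sphere of radius |a| with steps of length at most Delta, and [a - b] is at most the
  distance between its end points. We bound |c_i - c_0| by induction on the dimension r of the span W
  of the differences c_j - c_0. For r = 1, a line through c_0 meets the sphere in at most one further
  point, which the chain must reach in a single step. For larger r, take the first m such that
  c_0, ..., c_m already span W: by induction these points lie within L = G + Delta of c_0, where
  G = C Delta^(r!/2), and their differences contain a basis u_1, ..., u_r of W. The conditions
  |c_0 + u_j| = |c_0| say that the projection of c_0 to W is -w, where <u_j, w> = |u_j|^2 / 2.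
  In Cramer's rule for this system the Gram determinant is a nonzero integer, hence at least 1 in
  absolute value, so |w| <= C' L^(r+1); and every point of the sphere in c_0 + W lies within 2|w|
  of c_0. So the exponent of Delta is multiplied by r + 1 at each step, which gives Delta^((r+1)!/2).
\<close>

lemma abs_det_le_fact_mult_prod:
  fixes M :: "real^'n^'n"
  assumes "\<And>i j. \<bar>M$i$j\<bar> \<le> b i"
  shows "\<bar>det M\<bar> \<le> fact CARD('n) * prod b UNIV"
proof -
  have "\<bar>det M\<bar> \<le> (\<Sum>p | p permutes (UNIV::'n set). \<bar>of_int (sign p) * (\<Prod>i\<in>UNIV. M$i$p i)\<bar>)"
    unfolding det_def by (rule sum_abs)
  also have "\<dots> \<le> (\<Sum>p | p permutes (UNIV::'n set). prod b UNIV)"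
    by (intro sum_mono) (simp add: abs_mult abs_prod sign_def prod_mono assms)
  also have "\<dots> = fact CARD('n) * prod b UNIV"
    by (simp add: card_permutations)
  finally show ?thesis .
qed

text \<open>The Gram matrix of u on S, padded with the identity outside S so that it is a square matrix
  over the index type and Cramer's rule applies.\<close>

definition gram_padded :: "'n set \<Rightarrow> ('n \<Rightarrow> 'a::real_inner) \<Rightarrow> real^'n^'n" where
  "gram_padded S u = (\<chi> i j. if i \<in> S \<and> j \<in> S then inner (u i) (u j) else if i = j then 1 else 0)"

lemma gram_padded_mult_vec_in:
  assumes "i \<in> S"
  shows "(gram_padded S u *v v) $ i = inner (u i) (\<Sum>j\<in>S. v$j *\<^sub>R u j)"
proof -
  have "(gram_padded S u *v v) $ i = (\<Sum>j\<in>UNIV. if j \<in> S then inner (u i) (u j) * v$j else 0)"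
    unfolding matrix_vector_mult_def gram_padded_def using assms by (auto intro: sum.cong)
  also have "\<dots> = inner (u i) (\<Sum>j\<in>S. v$j *\<^sub>R u j)"
    by (simp add: sum.If_cases inner_sum_right mult.commute)
  finally show ?thesis .
qed

lemma gram_padded_mult_vec_out:
  assumes "i \<notin> S"
  shows "(gram_padded S u *v v) $ i = v $ i"
proof -
  have "\<And>j. (if i = j then 1 else 0) * v$j = (if i = j then v$j else 0)"
    by simp
  with assms show ?thesis
    by (simp add: matrix_vector_mult_def gram_padded_def)
qed

lemma det_gram_padded_nonzero:
  assumes inj: "inj_on u S" and indep: "independent (u ` S)"
  shows "det (gram_padded S u) \<noteq> 0"
proof -
  have "v = 0" if v: "gram_padded S u *v v = 0" for v
  proof -
    define w where "w = (\<Sum>j\<in>S. v$j *\<^sub>R u j)"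
    have uw: "inner (u j) w = 0" if "j \<in> S" for j
      using gram_padded_mult_vec_in[OF that, of u v] v by (simp add: w_def)
    have "inner w w = (\<Sum>j\<in>S. v$j * inner (u j) w)"
      unfolding w_def by (simp add: inner_sum_left)
    also have "\<dots> = 0"
      using uw by simp
    finally have "w = 0" by simp
    then have "(\<Sum>x\<in>u ` S. v $ the_inv_into S u x *\<^sub>R x) = 0"
      by (simp add: sum.reindex[OF inj] the_inv_into_f_f[OF inj] w_def)
    then have "v $ the_inv_into S u (u j) = 0" if "j \<in> S" for j
      using independentD[OF indep _ subset_refl, of "\<lambda>x. v $ the_inv_into S u x" "u j"] that by auto
    then have "v$j = 0" if "j \<in> S" for j
      using that by (simp add: the_inv_into_f_f[OF inj])
    moreover have "v$j = 0" if "j \<notin> S" for j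
      using gram_padded_mult_vec_out[OF that, of u v] v by simp
    ultimately show "v = 0" by (simp add: vec_eq_iff) blast
  qed
  then have "inj ((*v) (gram_padded S u))"
    by (intro injI) (metis matrix_vector_mult_diff_distrib right_minus_eq)
  then show ?thesis
    using det_nz_iff_inj[OF matrix_vector_mul_linear] by (metis matrix_of_matrix_vector_mul)
qed

lemma det_gram_padded_Ints:
  assumes "\<And>i j. i \<in> S \<Longrightarrow> j \<in> S \<Longrightarrow> inner (u i) (u j) \<in> \<int>"
  shows "det (gram_padded S u) \<in> \<int>"
  unfolding det_def gram_padded_def using assms by (intro Ints_sum Ints_mult Ints_prod) auto

lemma gram_padded_cramer_bound:
  fixes u :: "'n::finite \<Rightarrow> 'a::real_inner"
  assumes inj: "inj_on u S" and indep: "independent (u ` S)"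
    and int_inner: "\<And>i j. i \<in> S \<Longrightarrow> j \<in> S \<Longrightarrow> inner (u i) (u j) \<in> \<int>"
    and norm: "\<And>i. i \<in> S \<Longrightarrow> norm (u i) \<le> L"
    and b: "\<And>i. \<bar>b$i\<bar> \<le> (if i \<in> S then L\<^sup>2 else 1)"
  obtains x where "gram_padded S u *v x = b" "\<And>k. \<bar>x$k\<bar> \<le> fact CARD('n) * L ^ (2 * card S)"
proof
  define A where "A = gram_padded S u"
  define R where "R i = (if i \<in> S then L\<^sup>2 else 1)" for i
  have detA: "det A \<noteq> 0"
    unfolding A_def by (rule det_gram_padded_nonzero[OF inj indep])
  then have detA1: "\<bar>det A\<bar> \<ge> 1"
    using Ints_nonzero_abs_ge1 det_gram_padded_Ints[of S u, OF int_inner] by (auto simp: A_def)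
  define x where "x = (\<chi> k. det (\<chi> i j. if j = k then b$i else A$i$j) / det A)"
  show "gram_padded S u *v x = b"
    using cramer[OF detA] by (simp add: A_def x_def)
  have A: "\<bar>A$i$j\<bar> \<le> R i" for i j
  proof (cases "i \<in> S \<and> j \<in> S")
    case True
    have "\<bar>inner (u i) (u j)\<bar> \<le> norm (u i) * norm (u j)"
      by (rule Cauchy_Schwarz_ineq2)
    also have "\<dots> \<le> L * L"
      using True norm by (intro mult_mono) (auto intro: order_trans[OF norm_ge_zero])
    finally show ?thesis
      using True by (simp add: A_def R_def gram_padded_def power2_eq_square)
  next
    case False
    then show ?thesis
      by (auto simp: A_def R_def gram_padded_def)
  qed
  have b': "\<bar>b$i\<bar> \<le> R i" for i
    using b by (simp add: R_def)
  fix k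
  have "\<bar>x$k\<bar> \<le> \<bar>det (\<chi> i j. if j = k then b$i else A$i$j)\<bar>"
    using divide_left_mono[OF detA1, of "\<bar>det (\<chi> i j. if j = k then b$i else A$i$j)\<bar>"]
    using detA by (simp add: x_def)
  also have "\<dots> \<le> fact CARD('n) * prod R UNIV"
    by (rule abs_det_le_fact_mult_prod) (simp add: A b')
  also have "prod R UNIV = L ^ (2 * card S)"
    by (simp add: R_def prod.If_cases power_mult)
  finally show "\<bar>x$k\<bar> \<le> fact CARD('n) * L ^ (2 * card S)" .
qed

lemma gram_half_norm_solution:
  fixes u :: "'n::finite \<Rightarrow> 'a::real_inner" and L :: real
  assumes inj: "inj_on u S" and indep: "independent (u ` S)"
    and int_inner: "\<And>i j. i \<in> S \<Longrightarrow> j \<in> S \<Longrightarrow> inner (u i) (u j) \<in> \<int>"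
    and norm: "\<And>i. i \<in> S \<Longrightarrow> norm (u i) \<le> L"
  obtains w where "w \<in> span (u ` S)" "\<And>i. i \<in> S \<Longrightarrow> inner (u i) w = inner (u i) (u i) / 2"
    "inner w w \<le> card S * (fact CARD('n) * L ^ (2 * card S)) * (L\<^sup>2 / 2)"
proof -
  define b :: "real^'n" where "b = (\<chi> i. if i \<in> S then inner (u i) (u i) / 2 else 0)"
  have uu: "inner (u i) (u i) \<le> L\<^sup>2" if "i \<in> S" for i
    using norm[OF that] by (simp add: power2_norm_eq_inner[symmetric] power_mono)
  have "\<bar>b$i\<bar> \<le> (if i \<in> S then L\<^sup>2 else 1)" for i
    using uu[of i] by (auto simp: b_def) (use zero_le_power2[of L] in linarith)
  then obtain x where x: "gram_padded S u *v x = b"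
    and x_bound: "\<And>k. \<bar>x$k\<bar> \<le> fact CARD('n) * L ^ (2 * card S)"
    using gram_padded_cramer_bound[OF inj indep int_inner norm] by blast
  define w where "w = (\<Sum>j\<in>S. x$j *\<^sub>R u j)"
  have w_span: "w \<in> span (u ` S)"
    unfolding w_def by (intro span_sum span_scale span_base imageI)
  have uw: "inner (u i) w = inner (u i) (u i) / 2" if "i \<in> S" for i
    using gram_padded_mult_vec_in[OF that, of u x] x that by (simp add: w_def b_def)
  have "inner w w = (\<Sum>j\<in>S. x$j * inner (u j) w)"
    unfolding w_def by (simp add: inner_sum_left)
  also have "\<dots> \<le> (\<Sum>j\<in>S. fact CARD('n) * L ^ (2 * card S) * (L\<^sup>2 / 2))"
  proof (rule sum_mono)
    fix j assume j: "j \<in> S"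
    have "x$j * inner (u j) w \<le> \<bar>x$j\<bar> * \<bar>inner (u j) w\<bar>"
      by (simp add: abs_mult[symmetric])
    also have "\<dots> \<le> fact CARD('n) * L ^ (2 * card S) * (L\<^sup>2 / 2)"
    proof (rule mult_mono)
      show "\<bar>inner (u j) w\<bar> \<le> L\<^sup>2 / 2"
        using uu[OF j] by (simp add: uw[OF j])
    qed (use x_bound in auto)
    finally show "x$j * inner (u j) w \<le> fact CARD('n) * L ^ (2 * card S) * (L\<^sup>2 / 2)" .
  qed
  finally have "inner w w \<le> card S * (fact CARD('n) * L ^ (2 * card S)) * (L\<^sup>2 / 2)"
    by simp
  with w_span uw show ?thesis
    using that by blast
qed

lemma norm_diff_le_twice_orthogonal_shift:
  fixes p w x :: "'a::real_inner"
  assumes w: "w \<in> span B" and orth: "\<And>u. u \<in> B \<Longrightarrow> inner (p + w) u = 0"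
    and x: "x - p \<in> span B" and norm: "norm x = norm p"
  shows "norm (x - p) \<le> 2 * norm w"
proof -
  define q where "q = p + w"
  have q: "inner q z = 0" if "z \<in> span B" for z
    using orthogonal_to_span[OF that, of q] orth by (simp add: orthogonal_def q_def)
  define y where "y = x - q"
  have y: "y \<in> span B"
    using span_diff[OF x w] by (simp add: y_def q_def algebra_simps)
  have "inner x x = inner q q + inner y y"
    using q[OF y] by (simp add: y_def inner_diff_left inner_diff_right inner_commute)
  moreover have "inner p p = inner q q + inner w w"
    using q[OF w] by (simp add: q_def inner_add_left inner_add_right inner_commute)
  moreover have "inner x x = inner p p"
    using norm by (metis power2_norm_eq_inner)
  ultimately have "norm y = norm w"
    by (simp add: norm_eq_sqrt_inner)
  moreover have "x - p = y + w"
    by (simp add: y_def q_def)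
  ultimately show ?thesis
    using norm_triangle_ineq[of y w] by simp
qed

lemma sphere_displacement_in_span_bound:
  fixes p x :: "real^'n" and B :: "(real^'n) set"
  assumes indep: "independent B"
    and int_inner: "\<And>u v. u \<in> B \<Longrightarrow> v \<in> B \<Longrightarrow> inner u v \<in> \<int>"
    and short: "\<And>u. u \<in> B \<Longrightarrow> norm u \<le> L" and L: "0 \<le> L"
    and sphere: "\<And>u. u \<in> B \<Longrightarrow> norm (p + u) = norm p"
    and x: "x - p \<in> span B" "norm x = norm p"
  shows "norm (x - p) \<le> sqrt (2 * CARD('n) * fact CARD('n)) * L ^ (card B + 1)"
proof -
  have "card B \<le> CARD('n)"
    using independent_bound_general[OF indep] dim_subset_UNIV_cart[of B] by linarith
  then obtain S :: "'n set" where S: "card S = card B"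
    using obtain_subset_with_card_n by metis
  then obtain u where u: "bij_betw u S B"
    using finite_same_card_bij[OF finite _ S] independent_bound_general[OF indep] by blast
  then have inj: "inj_on u S" and uS: "u ` S = B"
    by (auto simp: bij_betw_def)
  obtain w where w: "w \<in> span (u ` S)" and uw: "\<And>i. i \<in> S \<Longrightarrow> inner (u i) w = inner (u i) (u i) / 2"
    and ww: "inner w w \<le> card S * (fact CARD('n) * L ^ (2 * card S)) * (L\<^sup>2 / 2)"
    by (rule gram_half_norm_solution[OF inj, of L]) (use indep int_inner short uS in auto)
  have "inner (p + w) v = 0" if "v \<in> B" for v
  proof -
    have "inner (p + v) (p + v) = inner p p"
      using sphere[OF that] by (metis power2_norm_eq_inner)
    then have "inner p v = - inner v v / 2"
      by (simp add: inner_add_left inner_add_right inner_commute)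
    moreover have "inner v w = inner v v / 2"
      using uw that uS by auto
    ultimately show ?thesis
      by (simp add: inner_add_left inner_commute[of p v] inner_commute[of w v])
  qed
  then have "norm (x - p) \<le> 2 * norm w"
    using norm_diff_le_twice_orthogonal_shift[OF w[unfolded uS] _ x] by blast
  then have "(norm (x - p))\<^sup>2 \<le> (2 * norm w)\<^sup>2"
    by (rule power_mono) simp
  also have "\<dots> = 4 * inner w w"
    by (simp add: power_mult_distrib power2_norm_eq_inner)
  also have "\<dots> \<le> 2 * card B * fact CARD('n) * (L ^ (2 * card B) * L\<^sup>2)"
    using ww S by (simp add: algebra_simps)
  also have "\<dots> = 2 * card B * fact CARD('n) * (L ^ (card B + 1))\<^sup>2"
    by (simp add: power_even_eq power_add power2_eq_square)
  also have "\<dots> \<le> 2 * CARD('n) * fact CARD('n) * (L ^ (card B + 1))\<^sup>2"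
    using \<open>card B \<le> CARD('n)\<close> by (intro mult_right_mono) auto
  also have "\<dots> = (sqrt (2 * CARD('n) * fact CARD('n)) * L ^ (card B + 1))\<^sup>2"
    by (simp add: power_mult_distrib)
  finally show ?thesis
    by (rule power2_le_imp_le) (simp add: L)
qed

definition int_vec :: "real^'n \<Rightarrow> bool" where
  "int_vec x \<longleftrightarrow> (\<forall>i. x$i \<in> \<int>)"

lemma int_vec_diff: "int_vec x \<Longrightarrow> int_vec y \<Longrightarrow> int_vec (x - y)"
  unfolding int_vec_def by (auto intro: Ints_diff)

lemma int_vec_uminus: "int_vec x \<Longrightarrow> int_vec (- x)"
  unfolding int_vec_def by auto

lemma inner_int_vec_Ints: "int_vec x \<Longrightarrow> int_vec y \<Longrightarrow> inner x y \<in> \<int>"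
  unfolding int_vec_def inner_vec_def by (auto intro: Ints_mult)

definition sphere_chain :: "real \<Rightarrow> (nat \<Rightarrow> real^'n) \<Rightarrow> nat \<Rightarrow> bool" where
  "sphere_chain D c k \<longleftrightarrow>
     (\<forall>i\<le>k. int_vec (c i) \<and> norm (c i) = norm (c 0)) \<and> (\<forall>i<k. dist (c i) (c (Suc i)) \<le> D)"

definition chain_span :: "(nat \<Rightarrow> 'a::real_vector) \<Rightarrow> nat \<Rightarrow> 'a set" where
  "chain_span c j = span ((\<lambda>i. c i - c 0) ` {..j})"

lemma sphere_chain_prefix: "sphere_chain D c k \<Longrightarrow> j \<le> k \<Longrightarrow> sphere_chain D c j"
  unfolding sphere_chain_def by (meson order_trans less_le_trans)

lemma sphere_chainD:
  assumes "sphere_chain D c k"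
  shows "i \<le> k \<Longrightarrow> int_vec (c i)" "i \<le> k \<Longrightarrow> norm (c i) = norm (c 0)"
    "i < k \<Longrightarrow> dist (c i) (c (Suc i)) \<le> D"
  using assms unfolding sphere_chain_def by blast+

lemma sphere_chain_snoc:
  assumes ch: "sphere_chain D c k" and "int_vec z" "norm z = norm (c 0)" "dist (c k) z \<le> D"
  shows "sphere_chain D (c(Suc k := z)) (Suc k)"
  unfolding sphere_chain_def
proof (intro conjI allI impI)
  fix i
  assume i: "i \<le> Suc k"
  show "int_vec ((c(Suc k := z)) i)"
    using sphere_chainD(1)[OF ch, of i] assms(2) i by (cases "i = Suc k") auto
  show "norm ((c(Suc k := z)) i) = norm ((c(Suc k := z)) 0)"
    using sphere_chainD(2)[OF ch, of i] assms(3) i by (cases "i = Suc k") auto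
next
  fix i
  assume "i < Suc k"
  then show "dist ((c(Suc k := z)) i) ((c(Suc k := z)) (Suc i)) \<le> D"
    using sphere_chainD(3)[OF ch, of i] assms(4) by (cases "i = k") auto
qed

lemma chain_span_mono: "j \<le> k \<Longrightarrow> chain_span c j \<subseteq> chain_span c k"
  unfolding chain_span_def by (intro span_mono image_mono) auto

lemma diff_mem_chain_span: "i \<le> k \<Longrightarrow> c i - c 0 \<in> chain_span c k"
  unfolding chain_span_def by (intro span_base) auto

lemma sphere_points_on_line_eq:
  fixes p x y :: "'a::euclidean_space"
  assumes "dim V \<le> 1" "x - p \<in> span V" "y - p \<in> span V" "x \<noteq> p" "y \<noteq> p"
    and "norm x = norm p" "norm y = norm p"
  shows "x = y"
proof -
  define v where "v = x - p"
  have v0: "v \<noteq> 0" using assms(4) by (simp add: v_def)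
  have "span {v} = span (span V)"
    by (rule dim_eq_span) (use assms(1,2) v0 v_def in auto)
  then have "y - p \<in> span {v}" using assms(3) by (metis span_span)
  then obtain t where t: "y - p = t *\<^sub>R v" by (auto simp: span_singleton)
  have t0: "t \<noteq> 0" using t assms(5) by auto
  have "inner (p + v) (p + v) = inner p p" "inner (p + t *\<^sub>R v) (p + t *\<^sub>R v) = inner p p"
    using assms(6,7) t v_def by (metis add.commute diff_add_cancel power2_norm_eq_inner)+
  then have "2 * inner p v + inner v v = 0" "t * (2 * inner p v + t * inner v v) = 0"
    by (simp_all add: inner_commute algebra_simps)
  then have "2 * inner p v + inner v v = 0" "2 * inner p v + t * inner v v = 0"
    using t0 by simp_all
  then have "(t - 1) * inner v v = 0"
    unfolding left_diff_distrib by linarith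
  then have "t = 1" using v0 by simp
  then show ?thesis using t v_def by simp
qed

lemma sphere_chain_dim1_bound:
  assumes ch: "sphere_chain D c k" and dim: "dim (chain_span c k) \<le> 1" and "0 \<le> D" and "i \<le> k"
  shows "dist (c i) (c 0) \<le> D"
proof (cases "c i = c 0")
  case True
  then show ?thesis using \<open>0 \<le> D\<close> by simp
next
  case False
  define m where "m = (LEAST j. c j \<noteq> c 0)"
  have cm: "c m \<noteq> c 0"
    unfolding m_def by (rule LeastI[of _ i]) (rule False)
  have "m \<le> i"
    unfolding m_def by (rule Least_le) (rule False)
  have "m \<noteq> 0" "m \<le> k"
    using cm \<open>m \<le> i\<close> \<open>i \<le> k\<close> by (cases m; simp)+
  then have "c (m - 1) = c 0"
    using not_less_Least[of "m - 1" "\<lambda>j. c j \<noteq> c 0"] by (simp add: m_def)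
  have "c m = c i"
  proof (rule sphere_points_on_line_eq)
    show "dim ((\<lambda>i. c i - c 0) ` {..k}) \<le> 1"
      using dim by (simp add: chain_span_def)
    show "c m - c 0 \<in> span ((\<lambda>i. c i - c 0) ` {..k})" "c i - c 0 \<in> span ((\<lambda>i. c i - c 0) ` {..k})"
      using diff_mem_chain_span[OF \<open>m \<le> k\<close>, of c] diff_mem_chain_span[OF \<open>i \<le> k\<close>, of c]
      unfolding chain_span_def by simp_all
    show "norm (c m) = norm (c 0)" "norm (c i) = norm (c 0)"
      using sphere_chainD(2)[OF ch \<open>m \<le> k\<close>] sphere_chainD(2)[OF ch \<open>i \<le> k\<close>] by simp_all
  qed (use cm False in auto)
  moreover have "dist (c (m - 1)) (c (Suc (m - 1))) \<le> D"
    using sphere_chainD(3)[OF ch, of "m - 1"] \<open>m \<noteq> 0\<close> \<open>m \<le> k\<close> by simp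
  ultimately show ?thesis
    using \<open>c (m - 1) = c 0\<close> \<open>m \<noteq> 0\<close> by (simp add: dist_commute)
qed

lemma sphere_chain_dist_le_add_step:
  assumes ch: "sphere_chain D c k" and "m \<le> k" "0 < m"
    and before: "\<And>j. j \<le> m - 1 \<Longrightarrow> dist (c j) (c 0) \<le> G" and "0 \<le> D" and "j \<le> m"
  shows "dist (c j) (c 0) \<le> G + D"
proof (cases "j \<le> m - 1")
  case True
  then show ?thesis
    using before[OF True] \<open>0 \<le> D\<close> by simp
next
  case False
  then have "j = Suc (m - 1)"
    using \<open>j \<le> m\<close> by simp
  moreover have "dist (c (m - 1)) (c (Suc (m - 1))) \<le> D"
    using sphere_chainD(3)[OF ch, of "m - 1"] \<open>m \<le> k\<close> \<open>0 < m\<close> by simp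
  ultimately show ?thesis
    using before[of "m - 1"] dist_triangle[of "c j" "c 0" "c (m - 1)"] by (simp add: dist_commute)
qed

lemma chain_span_first_full_prefix:
  fixes c :: "nat \<Rightarrow> 'a::euclidean_space"
  assumes dim: "dim (chain_span c k) = r + 1"
  obtains m B where "0 < m" "m \<le> k" "dim (chain_span c (m - 1)) \<le> r"
    "B \<subseteq> (\<lambda>j. c j - c 0) ` {..m}" "independent B" "card B = r + 1" "span B = chain_span c k"
proof -
  define m where "m = (LEAST j. r < dim (chain_span c j))"
  have r_less: "r < dim (chain_span c m)"
    unfolding m_def by (rule LeastI[of _ k]) (use dim in simp)
  have "m \<le> k"
    unfolding m_def by (rule Least_le) (use dim in simp)
  have "dim (chain_span c 0) = 0"
    by (simp add: chain_span_def)
  then have "0 < m"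
    using r_less by (metis gr0I not_less0)
  then have dim_before: "dim (chain_span c (m - 1)) \<le> r"
    using not_less_Least[of "m - 1" "\<lambda>j. r < dim (chain_span c j)"] by (simp add: m_def)
  obtain B where BV: "B \<subseteq> (\<lambda>j. c j - c 0) ` {..m}" and indep: "independent B"
    and VB: "(\<lambda>j. c j - c 0) ` {..m} \<subseteq> span B"
    using maximal_independent_subset by blast
  have span_B: "span B = chain_span c m"
    unfolding chain_span_def using span_mono[OF BV] span_minimal[OF VB subspace_span] by (rule subset_antisym)
  have "dim (chain_span c m) \<le> dim (chain_span c k)"
    using chain_span_mono[OF \<open>m \<le> k\<close>] by (rule dim_subset)
  then have card_B: "card B = r + 1"
    using dim_eq_card[OF span_B[unfolded chain_span_def] indep] r_less dim
    by (simp add: chain_span_def)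
  have "span (chain_span c m) = span (chain_span c k)"
    by (rule dim_eq_span) (use chain_span_mono[OF \<open>m \<le> k\<close>] dim r_less in auto)
  then have "span B = chain_span c k"
    using span_B by (metis chain_span_def span_span)
  with \<open>0 < m\<close> \<open>m \<le> k\<close> dim_before BV indep card_B show ?thesis
    using that by blast
qed

lemma sphere_chain_dim_step:
  fixes c :: "nat \<Rightarrow> real^'n"
  assumes ch: "sphere_chain D c k" and dim: "dim (chain_span c k) \<le> r + 1"
    and prefix: "\<And>j i. j \<le> k \<Longrightarrow> dim (chain_span c j) \<le> r \<Longrightarrow> i \<le> j \<Longrightarrow> dist (c i) (c 0) \<le> G"
    and "0 \<le> G" "0 \<le> D" and "i \<le> k"
  shows "dist (c i) (c 0) \<le> max G (sqrt (2 * CARD('n) * fact CARD('n)) * (G + D) ^ (r + 2))"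
proof (cases "dim (chain_span c k) \<le> r")
  case True
  then show ?thesis using prefix[OF order_refl True \<open>i \<le> k\<close>] by simp
next
  case False
  then obtain m B where "0 < m" "m \<le> k" and dim_before: "dim (chain_span c (m - 1)) \<le> r"
    and BV: "B \<subseteq> (\<lambda>j. c j - c 0) ` {..m}" and indep: "independent B" and "card B = r + 1"
    and span_B: "span B = chain_span c k"
    using chain_span_first_full_prefix[of c k r] dim by (metis le_antisym not_less_eq_eq Suc_eq_plus1)
  have short: "dist (c j) (c 0) \<le> G + D" if "j \<le> m" for j
    using sphere_chain_dist_le_add_step[OF ch \<open>m \<le> k\<close> \<open>0 < m\<close> _ \<open>0 \<le> D\<close> that]
      prefix[OF _ dim_before] \<open>m \<le> k\<close> by simp
  have "norm (c i - c 0) \<le> sqrt (2 * CARD('n) * fact CARD('n)) * (G + D) ^ (card B + 1)"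
  proof (rule sphere_displacement_in_span_bound[OF indep])
    have B_diff: "\<exists>j\<le>m. u = c j - c 0" if "u \<in> B" for u
      using that BV by auto
    have "int_vec u" if "u \<in> B" for u
      using B_diff[OF that] \<open>m \<le> k\<close> sphere_chainD(1)[OF ch] by (auto intro: int_vec_diff)
    then show "inner u v \<in> \<int>" if "u \<in> B" "v \<in> B" for u v
      using that by (simp add: inner_int_vec_Ints)
    show "norm u \<le> G + D" "norm (c 0 + u) = norm (c 0)" if u: "u \<in> B" for u
    proof -
      obtain j where "j \<le> m" "u = c j - c 0"
        using B_diff[OF u] by blast
      then show "norm u \<le> G + D" "norm (c 0 + u) = norm (c 0)"
        using short[of j] sphere_chainD(2)[OF ch, of j] \<open>m \<le> k\<close> by (simp_all add: dist_norm)
    qed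
    show "c i - c 0 \<in> span B"
      using diff_mem_chain_span[OF \<open>i \<le> k\<close>, of c] span_B by simp
    show "norm (c i) = norm (c 0)"
      using sphere_chainD(2)[OF ch \<open>i \<le> k\<close>] .
  qed (use \<open>0 \<le> G\<close> \<open>0 \<le> D\<close> in auto)
  then show ?thesis
    using \<open>card B = r + 1\<close> by (simp add: dist_norm)
qed

lemma fact_Suc_div_two:
  assumes "1 \<le> r"
  shows "1 \<le> fact (r + 1) div (2::nat)" "fact (r + 2) div 2 = (fact (r + 1) div 2) * (r + 2 :: nat)"
proof -
  have "2 dvd (fact (r + 1) :: nat)"
    by (rule dvd_fact) (use assms in auto)
  then obtain q :: nat where q: "fact (r + 1) = 2 * q" ..
  moreover have "q \<noteq> 0"
    using q by (metis fact_nonzero mult_0_right)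
  ultimately show "1 \<le> fact (r + 1) div (2::nat)"
    by simp
  have "fact (r + 2) = (r + 2) * (fact (r + 1) :: nat)"
    by (simp add: algebra_simps)
  then show "fact (r + 2) div 2 = (fact (r + 1) div 2) * (r + 2 :: nat)"
    using q by simp
qed

lemma max_le_power_bound:
  fixes C D K :: real
  assumes "1 \<le> C" "1 \<le> D" "1 \<le> K" "1 \<le> e" "1 \<le> n"
  shows "max (C * D ^ e) (K * (C * D ^ e + D) ^ n) \<le> K * (2 * C) ^ n * D ^ (e * n)"
proof -
  have "D \<le> D ^ e" "D ^ e \<le> C * D ^ e"
    using assms by (simp_all add: power_increasing[of 1 e D, simplified])
  then have G: "C * D ^ e + D \<le> 2 * C * D ^ e" "1 \<le> C * D ^ e + D"
    using assms by linarith+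
  have "C * D ^ e \<le> C * D ^ e + D" using assms by simp
  also have "\<dots> \<le> (C * D ^ e + D) ^ n"
    using G assms by (simp add: self_le_power)
  also have "\<dots> \<le> K * (C * D ^ e + D) ^ n"
    using G assms by simp
  finally have "max (C * D ^ e) (K * (C * D ^ e + D) ^ n) = K * (C * D ^ e + D) ^ n"
    by simp
  also have "\<dots> \<le> K * (2 * C * D ^ e) ^ n"
    using G assms by (intro mult_left_mono power_mono) auto
  also have "\<dots> = K * (2 * C) ^ n * D ^ (e * n)"
    by (simp add: power_mult_distrib power_mult)
  finally show ?thesis .
qed

lemma sphere_chain_bound:
  assumes "1 \<le> r"
  shows "\<exists>C\<ge>1. \<forall>D\<ge>1. \<forall>(c :: nat \<Rightarrow> real^'n) k i. sphere_chain D c k \<longrightarrow> dim (chain_span c k) \<le> r \<longrightarrow>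
           i \<le> k \<longrightarrow> dist (c i) (c 0) \<le> C * D ^ (fact (r + 1) div 2)"
  using assms
proof (induction r rule: nat_induct_at_least)
  case base
  show ?case
    by (intro exI[of _ 1]) (auto intro: sphere_chain_dim1_bound)
next
  case (Suc r)
  then obtain C :: real where "1 \<le> C" and IH: "\<And>D (c :: nat \<Rightarrow> real^'n) k i. 1 \<le> D \<Longrightarrow>
      sphere_chain D c k \<Longrightarrow> dim (chain_span c k) \<le> r \<Longrightarrow> i \<le> k \<Longrightarrow>
      dist (c i) (c 0) \<le> C * D ^ (fact (r + 1) div 2)"
    by blast
  define K where "K = sqrt (2 * CARD('n) * fact CARD('n))"
  have "1 * 1 \<le> real CARD('n) * fact CARD('n)"
    by (intro mult_mono fact_ge_1) (simp_all add: Suc_le_eq)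
  then have "1 \<le> K"
    unfolding K_def by simp
  have "1 \<le> K * (2 * C) ^ (r + 2)"
    using mult_mono[OF \<open>1 \<le> K\<close> one_le_power[of "2 * C" "r + 2"]] \<open>1 \<le> C\<close> \<open>1 \<le> K\<close> by simp
  moreover have "dist (c i) (c 0) \<le> K * (2 * C) ^ (r + 2) * D ^ (fact (Suc r + 1) div 2)"
    if D: "1 \<le> D" and ch: "sphere_chain D c k" and "dim (chain_span c k) \<le> Suc r" "i \<le> k"
    for D and c :: "nat \<Rightarrow> real^'n" and k i
  proof -
    have "dist (c i) (c 0) \<le> max (C * D ^ (fact (r + 1) div 2))
        (K * (C * D ^ (fact (r + 1) div 2) + D) ^ (r + 2))"
      unfolding K_def
    proof (rule sphere_chain_dim_step[OF ch])
      show "dist (c i') (c 0) \<le> C * D ^ (fact (r + 1) div 2)"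
        if "j \<le> k" "dim (chain_span c j) \<le> r" "i' \<le> j" for j i'
        using IH[OF D sphere_chain_prefix[OF ch \<open>j \<le> k\<close>]] that(2,3) .
    qed (use that \<open>1 \<le> C\<close> in auto)
    also have "\<dots> \<le> K * (2 * C) ^ (r + 2) * D ^ (fact (r + 1) div 2 * (r + 2))"
      by (rule max_le_power_bound[OF \<open>1 \<le> C\<close> D \<open>1 \<le> K\<close> fact_Suc_div_two(1)[OF Suc.hyps]]) simp
    also have "fact (r + 1) div 2 * (r + 2) = fact (Suc r + 1) div 2"
      using fact_Suc_div_two(2)[OF Suc.hyps] by (simp add: add.commute)
    finally show ?thesis .
  qed
  ultimately show ?case by blast
qed

lemma exists_sign_dist_le:
  fixes x s t :: "'a::real_normed_vector"
  assumes "x = s \<or> x = - s" and "min (dist s t) (dist s (- t)) \<le> D"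
  shows "\<exists>t'. (t' = t \<or> t' = - t) \<and> dist x t' \<le> D"
proof -
  have "dist (- s) (- t) = dist s t" "dist (- s) t = dist s (- t)"
    using dist_minus[of s t] dist_minus[of s "- t"] by simp_all
  then show ?thesis
    using assms by (auto simp: min_le_iff_disj)
qed

definition real_vec :: "int^'n \<Rightarrow> real^'n" where
  "real_vec a = (\<chi> i. of_int (a$i))"

lemma int_vec_real_vec: "int_vec (real_vec a)"
  by (simp add: int_vec_def real_vec_def)

lemma inorm_real_vec: "inorm a = norm (real_vec a)"
  unfolding inorm_def norm_vec_def L2_set_def real_vec_def by simp

lemma bdist_real_vec: "bdist a b = min (dist (real_vec a) (real_vec b)) (dist (real_vec a) (- real_vec b))"
proof -
  have "real_vec (a - b) = real_vec a - real_vec b" "real_vec (a + b) = real_vec a - - real_vec b"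
    by (simp_all add: real_vec_def vec_eq_iff)
  then show ?thesis
    by (simp add: bdist_def inorm_real_vec dist_norm)
qed

lemma bdist_commute: "bdist a b = bdist b a"
  unfolding bdist_real_vec dist_norm by (simp add: norm_minus_commute add.commute)

lemma simrel_sym: "simrel \<Delta> a b \<Longrightarrow> simrel \<Delta> b a"
  unfolding simrel_def by (simp add: bdist_commute)

lemma approx_rel_imp_sphere_chain:
  assumes "approx_rel \<Delta> a b"
  shows "\<exists>c k. sphere_chain (real \<Delta>) c k \<and> c 0 = real_vec a \<and> (c k = real_vec b \<or> c k = - real_vec b)"
  using assms unfolding approx_rel_def
proof (induction rule: equivclp_induct)
  case base
  show ?case
    by (rule exI[of _ "\<lambda>_. real_vec a"], rule exI[of _ 0]) (simp add: sphere_chain_def int_vec_real_vec)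
next
  case (step y z)
  then obtain c k where ch: "sphere_chain (real \<Delta>) c k" and c0: "c 0 = real_vec a"
    and ck: "c k = real_vec y \<or> c k = - real_vec y"
    by blast
  have "simrel \<Delta> y z"
    using step.hyps(2) simrel_sym by blast
  then have norm_yz: "norm (real_vec z) = norm (real_vec y)"
    and close: "min (dist (real_vec y) (real_vec z)) (dist (real_vec y) (- real_vec z)) \<le> real \<Delta>"
    by (simp_all add: simrel_def inorm_real_vec bdist_real_vec)
  obtain z' where z': "z' = real_vec z \<or> z' = - real_vec z" and "dist (c k) z' \<le> real \<Delta>"
    using exists_sign_dist_le[OF ck close] by blast
  moreover have "int_vec z'"
    using z' int_vec_real_vec int_vec_uminus by blast
  moreover have "norm z' = norm (c 0)"
    using z' norm_yz ck sphere_chainD(2)[OF ch order_refl] by auto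
  ultimately have "sphere_chain (real \<Delta>) (c(Suc k := z')) (Suc k)"
    by (intro sphere_chain_snoc[OF ch])
  moreover have "(c(Suc k := z')) 0 = real_vec a"
    using c0 by simp
  ultimately show ?case
    using z' by fastforce
qed

theorem proposition3p1:
  shows "\<exists>C::real. \<forall>\<Delta>::nat. \<Delta> \<ge> 1 \<longrightarrow>
           dDelta \<Delta> TYPE('n::finite) \<le> ereal (C * real \<Delta> ^ (fact (CARD('n) + 1) div 2))"
proof -
  have "1 \<le> CARD('n)"
    by (simp add: Suc_le_eq)
  then obtain C where chain_bound: "\<forall>D\<ge>1. \<forall>(c :: nat \<Rightarrow> real^'n) k i. sphere_chain D c k \<longrightarrow>
      dim (chain_span c k) \<le> CARD('n) \<longrightarrow> i \<le> k \<longrightarrow> dist (c i) (c 0) \<le> C * D ^ (fact (CARD('n) + 1) div 2)"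
    using sphere_chain_bound by blast
  have "bdist a b \<le> C * real \<Delta> ^ (fact (CARD('n) + 1) div 2)"
    if "1 \<le> \<Delta>" and ab: "approx_rel \<Delta> a b" for \<Delta> and a b :: "int^'n"
  proof -
    obtain c k where ch: "sphere_chain (real \<Delta>) c k" and "c 0 = real_vec a"
      and "c k = real_vec b \<or> c k = - real_vec b"
      using approx_rel_imp_sphere_chain[OF ab] by blast
    then have "bdist a b \<le> dist (c k) (c 0)"
      by (auto simp: bdist_real_vec dist_commute)
    also have "\<dots> \<le> C * real \<Delta> ^ (fact (CARD('n) + 1) div 2)"
      using chain_bound ch dim_subset_UNIV_cart[of "chain_span c k"] \<open>1 \<le> \<Delta>\<close> by simp
    finally show ?thesis .
  qed
  then show ?thesis
    unfolding dDelta_def by (auto intro!: exI[of _ C] Sup_least)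
qed

end
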